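(* Let $\Omega\subset\mathbb{R}^d$ be a hypercube of side length $L$, with probability densities $\varphi_P,\varphi_D$ on $\Omega$. For an integer $r\ge1$, let $\mathcal{C}_r=\{C^1,\ldots,C^{r^d}\}$ be the partition of $\Omega$ into the grid of $r^d$ cubes of side $L/r$, and let $\overline{A}=[\overline{\alpha}_{ij}]$ be an optimal solution of the linear program: minimize $\sum_{i,j}\alpha_{ij}\max_{y\in C^i,x\in C^j}\|x-y\|$ over $\alpha_{ij}\ge0$ subject to $\sum_j\alpha_{ij}=\varphi_D(C^i)$ for all $i$ and $\sum_i\alpha_{ij}=\varphi_P(C^j)$ for all $j$. Let $Y$ have density $\varphi_D$ and let $X'$ be its shadow site: with $C^i$ the cell containing $Y$, sample $J=j'$ with probability $\overline{\alpha}_{ij'}/\varphi_D(C^i)$, then sample $X'$ from $\varphi_P$ conditioned on $X'\in C^J$. Then $$\mathbb{E}\|X'-Y\|-W(\varphi_D,\varphi_P)\le\frac{2L\sqrt{d}}{r}.$$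
   Context: For a cell $C$, $\varphi_P(C)=\int_C\varphi_P$, $\varphi_D(C)=\int_C\varphi_D$. The Euclidean Wasserstein distance is $W(\varphi_1,\varphi_2)=\inf_{\gamma\in\Gamma(\varphi_1,\varphi_2)}\int_{\Omega\times\Omega}\|y-x\|\,d\gamma(x,y)$, with $\Gamma(\varphi_1,\varphi_2)$ the set of measures on $\Omega\times\Omega$ with marginal densities $\varphi_1,\varphi_2$. *)

theory Defs
  imports "HOL-Analysis.Analysis" "HOL-Probability.Probability"
begin

type_synonym 'n cidx = "'n \<Rightarrow> nat"

definition hcube :: "real^'n \<Rightarrow> real \<Rightarrow> (real^'n) set" where
  "hcube a L = cbox a (\<chi> i. a$i + L)"

definition cell_indices :: "nat \<Rightarrow> ('n::finite) cidx set" where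
  "cell_indices r = {k. \<forall>i. k i < r}"

text \<open>Grid index of a point of Omega (points on the upper faces go to the last cell).\<close>
definition grid_index :: "real^'n \<Rightarrow> real \<Rightarrow> nat \<Rightarrow> real^'n \<Rightarrow> 'n cidx" where
  "grid_index a L r x = (\<lambda>i. min (r - 1) (nat \<lfloor>(x$i - a$i) * real r / L\<rfloor>))"

text \<open>The cells C^k of the partition of Omega (a genuine partition).\<close>
definition cell :: "real^'n \<Rightarrow> real \<Rightarrow> nat \<Rightarrow> 'n cidx \<Rightarrow> (real^'n) set" where
  "cell a L r k = {x \<in> hcube a L. grid_index a L r x = k}"

definition ccell :: "real^'n \<Rightarrow> real \<Rightarrow> nat \<Rightarrow> 'n cidx \<Rightarrow> (real^'n) set" where
  "ccell a L r k = cbox (\<chi> i. a$i + real (k i) * L / real r) (\<chi> i. a$i + real (k i + 1) * L / real r)"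

definition cell_cost :: "real^'n \<Rightarrow> real \<Rightarrow> nat \<Rightarrow> 'n cidx \<Rightarrow> 'n cidx \<Rightarrow> real" where
  "cell_cost a L r i j = Sup {norm (x - y) | x y. y \<in> ccell a L r i \<and> x \<in> ccell a L r j}"

definition cmass :: "(real^'n \<Rightarrow> real) \<Rightarrow> (real^'n) set \<Rightarrow> real" where
  "cmass \<phi> C = (LINT x:C|lborel. \<phi> x)"

definition lp_feasible ::
  "real^'n \<Rightarrow> real \<Rightarrow> nat \<Rightarrow> (real^'n \<Rightarrow> real) \<Rightarrow> (real^'n \<Rightarrow> real)
     \<Rightarrow> ('n::finite cidx \<Rightarrow> 'n cidx \<Rightarrow> real) \<Rightarrow> bool" where
  "lp_feasible a L r \<phi>P \<phi>D \<alpha> \<longleftrightarrow>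
     (\<forall>i\<in>cell_indices r. \<forall>j\<in>cell_indices r. \<alpha> i j \<ge> 0) \<and>
     (\<forall>i\<in>cell_indices r. (\<Sum>j\<in>cell_indices r. \<alpha> i j) = cmass \<phi>D (cell a L r i)) \<and>
     (\<forall>j\<in>cell_indices r. (\<Sum>i\<in>cell_indices r. \<alpha> i j) = cmass \<phi>P (cell a L r j))"

definition lp_cost :: "real^'n \<Rightarrow> real \<Rightarrow> nat \<Rightarrow> ('n::finite cidx \<Rightarrow> 'n cidx \<Rightarrow> real) \<Rightarrow> real" where
  "lp_cost a L r \<alpha> = (\<Sum>i\<in>cell_indices r. \<Sum>j\<in>cell_indices r. \<alpha> i j * cell_cost a L r i j)"

definition lp_optimal ::
  "real^'n \<Rightarrow> real \<Rightarrow> nat \<Rightarrow> (real^'n \<Rightarrow> real) \<Rightarrow> (real^'n \<Rightarrow> real)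
     \<Rightarrow> ('n::finite cidx \<Rightarrow> 'n cidx \<Rightarrow> real) \<Rightarrow> bool" where
  "lp_optimal a L r \<phi>P \<phi>D \<alpha> \<longleftrightarrow> lp_feasible a L r \<phi>P \<phi>D \<alpha> \<and>
     (\<forall>\<beta>. lp_feasible a L r \<phi>P \<phi>D \<beta> \<longrightarrow> lp_cost a L r \<alpha> \<le> lp_cost a L r \<beta>)"

text \<open>Joint law of (Y, X'): Y has density phi_D; given Y in C^i, J = j with probability
  alpha_ij / phi_D(C^i); given J = j, X' has density phi_P restricted to C^j and normalised.\<close>
definition shadow_law ::
  "real^'n \<Rightarrow> real \<Rightarrow> nat \<Rightarrow> (real^'n \<Rightarrow> real) \<Rightarrow> (real^'n \<Rightarrow> real)
     \<Rightarrow> ('n::finite cidx \<Rightarrow> 'n cidx \<Rightarrow> real) \<Rightarrow> ((real^'n) \<times> (real^'n)) measure" where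
  "shadow_law a L r \<phi>P \<phi>D \<alpha> = density (lborel \<Otimes>\<^sub>M lborel)
     (\<lambda>(y, x). ennreal (\<Sum>i\<in>cell_indices r. \<Sum>j\<in>cell_indices r.
         indicator (cell a L r i) y * \<phi>D y
         * (\<alpha> i j / cmass \<phi>D (cell a L r i))
         * (indicator (cell a L r j) x * \<phi>P x / cmass \<phi>P (cell a L r j))))"

definition shadow_expected_dist ::
  "real^'n \<Rightarrow> real \<Rightarrow> nat \<Rightarrow> (real^'n \<Rightarrow> real) \<Rightarrow> (real^'n \<Rightarrow> real)
     \<Rightarrow> ('n::finite cidx \<Rightarrow> 'n cidx \<Rightarrow> real) \<Rightarrow> ennreal" where
  "shadow_expected_dist a L r \<phi>P \<phi>D \<alpha> =
     (\<integral>\<^sup>+ z. ennreal (norm (snd z - fst z)) \<partial>shadow_law a L r \<phi>P \<phi>D \<alpha>)"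

definition couplings :: "(real^'n) set \<Rightarrow> (real^'n \<Rightarrow> real) \<Rightarrow> (real^'n \<Rightarrow> real)
     \<Rightarrow> ((real^'n::finite) \<times> (real^'n)) measure set" where
  "couplings \<Omega> \<phi>1 \<phi>2 = {\<gamma>. sets \<gamma> = sets (lborel \<Otimes>\<^sub>M lborel) \<and>
      emeasure \<gamma> (space \<gamma> - \<Omega> \<times> \<Omega>) = 0 \<and>
      distr \<gamma> lborel fst = density lborel (\<lambda>x. ennreal (indicator \<Omega> x * \<phi>1 x)) \<and>
      distr \<gamma> lborel snd = density lborel (\<lambda>y. ennreal (indicator \<Omega> y * \<phi>2 y))}"

definition wasserstein :: "(real^'n) set \<Rightarrow> (real^'n \<Rightarrow> real) \<Rightarrow> (real^'n \<Rightarrow> real) \<Rightarrow> ennreal" where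
  "wasserstein \<Omega> \<phi>1 \<phi>2 =
     (INF \<gamma>\<in>couplings \<Omega> \<phi>1 \<phi>2. \<integral>\<^sup>+ z. ennreal (norm (snd z - fst z)) \<partial>\<gamma>)"

definition is_density_on :: "(real^'n::finite) set \<Rightarrow> (real^'n \<Rightarrow> real) \<Rightarrow> bool" where
  "is_density_on \<Omega> \<phi> \<longleftrightarrow> \<phi> \<in> borel_measurable lborel \<and> (\<forall>x\<in>\<Omega>. \<phi> x \<ge> 0) \<and>
     set_integrable lborel \<Omega> \<phi> \<and> (LINT x:\<Omega>|lborel. \<phi> x) = 1"

end

(* For (y, x) in C^i \<times> C^j the LP cost c_ij is at least \<parallel>x - y\<parallel> and exceeds it by at most twice
   the cell diameter L \<surd>d / r.  The shadow coupling only moves mass from C^i to C^j, in total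
   \<alpha>_ij, so its expected cost is at most the LP value.  Conversely, every coupling \<gamma> of
   \<phi>_D and \<phi>_P yields the feasible plan \<gamma>(C^i \<times> C^j), whose LP cost is at most the cost of \<gamma>
   plus 2 L \<surd>d / r; by optimality this bounds the LP value, and taking the infimum over \<gamma>
   gives the bound by W(\<phi>_D, \<phi>_P). *)

theory Submission
  imports Defs
begin

lemma hcube_in_sets_lborel [measurable]: "hcube a L \<in> sets lborel"
  unfolding hcube_def by simp

lemma cell_in_sets_lborel [measurable]: "cell a L r k \<in> sets lborel"
  unfolding cell_def grid_index_def hcube_def fun_eq_iff by measurable

lemma cell_subset_hcube: "cell a L r k \<subseteq> hcube a L"
  unfolding cell_def by auto

lemma finite_cell_indices: "finite (cell_indices r :: 'n::finite cidx set)"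
proof -
  have "cell_indices r = (PiE UNIV (\<lambda>_::'n. {..<r}))"
    unfolding cell_indices_def by (auto simp: PiE_def Pi_def extensional_def)
  thus ?thesis by (simp add: finite_PiE)
qed

lemma grid_index_in_cell_indices: "r \<ge> 1 \<Longrightarrow> grid_index a L r x \<in> cell_indices r"
  unfolding cell_indices_def grid_index_def by auto

lemma UN_cell_eq_hcube: "r \<ge> 1 \<Longrightarrow> (\<Union>k\<in>cell_indices r. cell a L r k) = hcube a L"
  using grid_index_in_cell_indices unfolding cell_def by blast

lemma sum_indicator_cell:
  fixes y :: "real^'n::finite"
  assumes "r \<ge> 1"
  shows "(\<Sum>k\<in>cell_indices r. indicator (cell a L r k) y :: 'a::{comm_monoid_add,zero_neq_one})
         = indicator (hcube a L) y"
proof -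
  have "(\<Sum>k\<in>cell_indices r. indicator (cell a L r k) y :: 'a) =
        (\<Sum>k\<in>cell_indices r. if grid_index a L r y = k then indicator (hcube a L) y else 0)"
    unfolding cell_def indicator_def by (intro sum.cong) auto
  also have "\<dots> = indicator (hcube a L) y"
    using grid_index_in_cell_indices[OF assms] finite_cell_indices by (subst sum.delta') auto
  finally show ?thesis .
qed

lemma disjoint_family_on_times_cell: "disjoint_family_on (\<lambda>k. A \<times> cell a L r k) K"
  unfolding disjoint_family_on_def cell_def by auto

lemma disjoint_family_on_cell_times: "disjoint_family_on (\<lambda>k. cell a L r k \<times> B) K"
  unfolding disjoint_family_on_def cell_def by auto

lemma cell_subset_ccell:
  assumes "L > 0" "r \<ge> 1"
  shows "cell a L r k \<subseteq> ccell a L r k"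
proof
  fix x assume "x \<in> cell a L r k"
  hence x: "x \<in> hcube a L" and k: "grid_index a L r x = k" by (auto simp: cell_def)
  show "x \<in> ccell a L r k"
    unfolding ccell_def mem_box_cart
  proof (intro allI conjI)
    fix m
    define t where "t = (x$m - a$m) * real r / L"
    have "a$m \<le> x$m" "x$m \<le> a$m + L" using x by (auto simp: hcube_def mem_box_cart)
    hence t: "0 \<le> t" "t \<le> real r"
      unfolding t_def using assms by (auto simp: divide_le_eq mult.commute)
    have km: "k m = min (r - 1) (nat \<lfloor>t\<rfloor>)" using k unfolding grid_index_def t_def by auto
    have "real (k m) \<le> t" using km t by linarith
    thus "(\<chi> i. a$i + real (k i) * L / real r) $ m \<le> x $ m"
      unfolding t_def using assms by (simp add: field_simps)
    have "t \<le> real (k m) + 1"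
    proof (cases "nat \<lfloor>t\<rfloor> \<le> r - 1")
      case True
      thus ?thesis using km t by linarith
    next
      case False
      thus ?thesis using km t assms by simp
    qed
    thus "x $ m \<le> (\<chi> i. a$i + real (k i + 1) * L / real r) $ m"
      unfolding t_def using assms by (simp add: field_simps)
  qed
qed

lemma ccell_nonempty:
  assumes "L > 0" "r \<ge> 1"
  shows "ccell a L r k \<noteq> {}"
proof -
  have "(\<chi> i. a$i + real (k i) * L / real r) \<in> ccell a L r k"
    unfolding ccell_def mem_box_cart using assms by (auto intro!: divide_right_mono)
  thus ?thesis by auto
qed

lemma norm_diff_le_cbox_side:
  fixes x y :: "real^'n::finite"
  assumes "x \<in> cbox l u" "y \<in> cbox l u" "\<And>i. u$i - l$i \<le> s"
  shows "norm (x - y) \<le> s * sqrt (real CARD('n))"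
proof -
  have comp: "\<bar>(x - y)$i\<bar> \<le> s" for i
    using assms unfolding mem_box_cart by (smt (verit) vector_minus_component)
  hence s: "s \<ge> 0" by (meson abs_ge_zero order_trans)
  have "norm (x - y) = sqrt (\<Sum>i\<in>UNIV. ((x - y)$i)\<^sup>2)"
    by (simp add: norm_vec_def L2_set_def)
  also have "\<dots> \<le> sqrt (\<Sum>i\<in>(UNIV::'n set). s\<^sup>2)"
    using comp s by (intro real_sqrt_le_mono sum_mono) (metis abs_le_square_iff abs_of_nonneg)
  also have "\<dots> = s * sqrt (real CARD('n))"
    using s by (simp add: real_sqrt_mult)
  finally show ?thesis .
qed

lemma norm_diff_le_ccell_diameter:
  fixes x y :: "real^'n::finite"
  assumes "x \<in> ccell a L r k" "y \<in> ccell a L r k"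
  shows "norm (x - y) \<le> L * sqrt (real CARD('n)) / real r"
  using norm_diff_le_cbox_side[OF assms[unfolded ccell_def], of "L / real r"]
  by (simp add: add_divide_distrib distrib_right)

lemma cell_cost_bounds:
  fixes x y :: "real^'n::finite"
  assumes "x \<in> ccell a L r j" "y \<in> ccell a L r i"
  shows "norm (x - y) \<le> cell_cost a L r i j"
    and "cell_cost a L r i j \<le> norm (x - y) + 2 * (L * sqrt (real CARD('n)) / real r)"
proof -
  let ?D = "L * sqrt (real CARD('n)) / real r"
  let ?S = "{norm (x - y) | x y. y \<in> ccell a L r i \<and> x \<in> ccell a L r j}"
  have ub: "s \<le> norm (x - y) + 2 * ?D" if "s \<in> ?S" for s
  proof -
    obtain x' y' where s: "s = norm (x' - y')" "y' \<in> ccell a L r i" "x' \<in> ccell a L r j"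
      using \<open>s \<in> ?S\<close> by blast
    have "x' - y' = (x' - x) + (x - y) + (y - y')" by simp
    hence "norm (x' - y') \<le> norm ((x' - x) + (x - y)) + norm (y - y')"
      by (metis norm_triangle_ineq)
    also have "\<dots> \<le> norm (x' - x) + norm (x - y) + norm (y - y')"
      by (intro add_right_mono norm_triangle_ineq)
    also have "\<dots> \<le> ?D + norm (x - y) + ?D"
      using norm_diff_le_ccell_diameter s assms by (intro add_mono) auto
    finally show ?thesis using s by simp
  qed
  have mem: "norm (x - y) \<in> ?S" using assms by blast
  moreover have "bdd_above ?S" using ub by (intro bdd_aboveI)
  ultimately show "norm (x - y) \<le> cell_cost a L r i j"
    unfolding cell_cost_def by (rule cSup_upper)
  show "cell_cost a L r i j \<le> norm (x - y) + 2 * ?D"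
    unfolding cell_cost_def using mem by (intro cSup_least ub) auto
qed

lemma cell_cost_nonneg:
  assumes "L > 0" "r \<ge> 1"
  shows "cell_cost a L r i j \<ge> 0"
proof -
  obtain x y where "x \<in> ccell a L r j" "y \<in> ccell a L r i"
    using ccell_nonempty[OF assms] by blast
  thus ?thesis using cell_cost_bounds(1) norm_ge_zero order_trans by blast
qed

lemma integrable_indicator_times_density:
  assumes "is_density_on \<Omega> \<phi>" "A \<in> sets lborel" "A \<subseteq> \<Omega>"
  shows "integrable lborel (\<lambda>x. indicator A x * \<phi> x)"
  using set_integrable_subset[of lborel \<Omega> \<phi> A] assms
  unfolding is_density_on_def set_integrable_def by simp

lemma indicator_times_density_nonneg:
  assumes "is_density_on \<Omega> \<phi>" "A \<subseteq> \<Omega>"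
  shows "indicator A x * \<phi> x \<ge> 0"
  using assms unfolding is_density_on_def by (auto simp: indicator_def)

lemma cmass_nonneg:
  assumes "is_density_on \<Omega> \<phi>" "A \<subseteq> \<Omega>"
  shows "cmass \<phi> A \<ge> 0"
  unfolding cmass_def set_lebesgue_integral_def
  using indicator_times_density_nonneg[OF assms] by (simp add: integral_nonneg)

lemma nn_integral_indicator_times_density:
  assumes "is_density_on \<Omega> \<phi>" "A \<in> sets lborel" "A \<subseteq> \<Omega>"
  shows "(\<integral>\<^sup>+x. ennreal (indicator A x * \<phi> x) \<partial>lborel) = ennreal (cmass \<phi> A)"
  unfolding cmass_def set_lebesgue_integral_def
  using nn_integral_eq_integral[OF integrable_indicator_times_density[OF assms]]
    indicator_times_density_nonneg[OF assms(1,3)] by simp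

lemma nn_integral_pair_measure_times:
  fixes f :: "'a \<Rightarrow> ennreal" and g :: "'b \<Rightarrow> ennreal"
  assumes "sigma_finite_measure N"
    and [measurable]: "f \<in> borel_measurable M" "g \<in> borel_measurable N"
  shows "(\<integral>\<^sup>+z. f (fst z) * g (snd z) \<partial>(M \<Otimes>\<^sub>M N)) = (\<integral>\<^sup>+x. f x \<partial>M) * (\<integral>\<^sup>+y. g y \<partial>N)"
proof -
  have "(\<integral>\<^sup>+z. f (fst z) * g (snd z) \<partial>(M \<Otimes>\<^sub>M N)) = (\<integral>\<^sup>+x. \<integral>\<^sup>+y. f x * g y \<partial>N \<partial>M)"
    by (subst sigma_finite_measure.nn_integral_fst[OF assms(1), symmetric]) auto
  also have "\<dots> = (\<integral>\<^sup>+x. f x * (\<integral>\<^sup>+y. g y \<partial>N) \<partial>M)"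
    by (simp add: nn_integral_cmult)
  also have "\<dots> = (\<integral>\<^sup>+x. f x \<partial>M) * (\<integral>\<^sup>+y. g y \<partial>N)"
    by (simp add: nn_integral_multc)
  finally show ?thesis .
qed

section \<open>The shadow coupling\<close>

text \<open>The joint density of (Y, X') on the event that Y lies in C^i and J = j.\<close>
definition shadow_block ::
  "real^'n \<Rightarrow> real \<Rightarrow> nat \<Rightarrow> (real^'n \<Rightarrow> real) \<Rightarrow> (real^'n \<Rightarrow> real)
     \<Rightarrow> ('n::finite cidx \<Rightarrow> 'n cidx \<Rightarrow> real) \<Rightarrow> 'n cidx \<Rightarrow> 'n cidx \<Rightarrow> real^'n \<Rightarrow> real^'n \<Rightarrow> real"
where
  "shadow_block a L r \<phi>P \<phi>D \<alpha> i j y x =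
     \<alpha> i j / (cmass \<phi>D (cell a L r i) * cmass \<phi>P (cell a L r j))
     * (indicator (cell a L r i) y * \<phi>D y) * (indicator (cell a L r j) x * \<phi>P x)"

lemma shadow_law_eq_density_shadow_block:
  "shadow_law a L r \<phi>P \<phi>D \<alpha> = density (lborel \<Otimes>\<^sub>M lborel)
     (\<lambda>z. ennreal (\<Sum>i\<in>cell_indices r. \<Sum>j\<in>cell_indices r.
        shadow_block a L r \<phi>P \<phi>D \<alpha> i j (fst z) (snd z)))"
  unfolding shadow_law_def shadow_block_def split_beta by (simp add: field_simps)

lemma shadow_block_nonneg:
  assumes "is_density_on (hcube a L) \<phi>P" "is_density_on (hcube a L) \<phi>D" "\<alpha> i j \<ge> 0"
  shows "shadow_block a L r \<phi>P \<phi>D \<alpha> i j y x \<ge> 0"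
  unfolding shadow_block_def
  using assms cell_subset_hcube
  by (intro mult_nonneg_nonneg divide_nonneg_nonneg indicator_times_density_nonneg cmass_nonneg)

lemma nn_integral_shadow_block_le:
  assumes "is_density_on (hcube a L) \<phi>P" "is_density_on (hcube a L) \<phi>D" "\<alpha> i j \<ge> 0"
  shows "(\<integral>\<^sup>+z. ennreal (shadow_block a L r \<phi>P \<phi>D \<alpha> i j (fst z) (snd z)) \<partial>(lborel \<Otimes>\<^sub>M lborel))
           \<le> ennreal (\<alpha> i j)"
proof -
  let ?mD = "cmass \<phi>D (cell a L r i)" and ?mP = "cmass \<phi>P (cell a L r j)"
  let ?c = "\<alpha> i j / (?mD * ?mP)"
  have [measurable]: "\<phi>P \<in> borel_measurable lborel" "\<phi>D \<in> borel_measurable lborel"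
    using assms unfolding is_density_on_def by auto
  have m: "?mD \<ge> 0" "?mP \<ge> 0"
    using assms cmass_nonneg cell_subset_hcube by blast+
  have c: "?c \<ge> 0" using assms m by simp
  have nD: "indicator (cell a L r i) y * \<phi>D y \<ge> 0" and nP: "indicator (cell a L r j) y * \<phi>P y \<ge> 0" for y
    using assms cell_subset_hcube by (blast intro: indicator_times_density_nonneg)+
  have "ennreal (shadow_block a L r \<phi>P \<phi>D \<alpha> i j y x)
      = ennreal ?c * (ennreal (indicator (cell a L r i) y * \<phi>D y)
                      * ennreal (indicator (cell a L r j) x * \<phi>P x))" for y x
  proof -
    have "shadow_block a L r \<phi>P \<phi>D \<alpha> i j y x
        = ?c * ((indicator (cell a L r i) y * \<phi>D y) * (indicator (cell a L r j) x * \<phi>P x))"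
      unfolding shadow_block_def by (simp only: mult.assoc)
    thus ?thesis by (simp only: ennreal_mult[OF c mult_nonneg_nonneg[OF nD nP]] ennreal_mult[OF nD nP])
  qed
  hence "(\<integral>\<^sup>+z. ennreal (shadow_block a L r \<phi>P \<phi>D \<alpha> i j (fst z) (snd z)) \<partial>(lborel \<Otimes>\<^sub>M lborel))
      = ennreal ?c * (\<integral>\<^sup>+z. ennreal (indicator (cell a L r i) (fst z) * \<phi>D (fst z))
                          * ennreal (indicator (cell a L r j) (snd z) * \<phi>P (snd z)) \<partial>(lborel \<Otimes>\<^sub>M lborel))"
    by (simp add: nn_integral_cmult)
  also have "\<dots> = ennreal ?c * (ennreal ?mD * ennreal ?mP)"
    using assms cell_subset_hcube
    by (subst nn_integral_pair_measure_times)
       (simp_all add: nn_integral_indicator_times_density[OF _ cell_in_sets_lborel cell_subset_hcube]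
         lborel.sigma_finite_measure_axioms)
  also have "\<dots> = ennreal (\<alpha> i j * ((?mD * ?mP) / (?mD * ?mP)))"
    using c m by (simp add: ennreal_mult[symmetric])
  \<comment> \<open>Only an inequality: a cell of mass 0 makes the quotient 0 (as x / 0 = 0).\<close>
  also have "\<dots> \<le> ennreal (\<alpha> i j)"
    using assms(3) by (intro ennreal_leI) (simp add: mult_le_one)
  finally show ?thesis .
qed

lemma shadow_block_eq_0:
  "\<not> (y \<in> cell a L r i \<and> x \<in> cell a L r j) \<Longrightarrow> shadow_block a L r \<phi>P \<phi>D \<alpha> i j y x = 0"
  unfolding shadow_block_def by auto

lemma ennreal_sum_sum:
  assumes "\<And>i j. i \<in> I \<Longrightarrow> j \<in> J \<Longrightarrow> 0 \<le> f i j"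
  shows "ennreal (\<Sum>i\<in>I. \<Sum>j\<in>J. f i j) = (\<Sum>i\<in>I. \<Sum>j\<in>J. ennreal (f i j))"
  using assms by (simp add: sum_nonneg)

lemma shadow_expected_dist_le_lp_cost:
  fixes \<alpha> :: "'n::finite cidx \<Rightarrow> 'n cidx \<Rightarrow> real"
  assumes L: "L > 0" and r: "r \<ge> 1"
    and dP: "is_density_on (hcube a L) \<phi>P" and dD: "is_density_on (hcube a L) \<phi>D"
    and \<alpha>: "\<And>i j. i \<in> cell_indices r \<Longrightarrow> j \<in> cell_indices r \<Longrightarrow> \<alpha> i j \<ge> 0"
  shows "shadow_expected_dist a L r \<phi>P \<phi>D \<alpha> \<le> ennreal (lp_cost a L r \<alpha>)"
proof -
  let ?K = "cell_indices r :: 'n cidx set"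
  let ?b = "shadow_block a L r \<phi>P \<phi>D \<alpha>"
  let ?c = "cell_cost a L r"
  let ?M = "lborel \<Otimes>\<^sub>M lborel :: ((real^'n) \<times> (real^'n)) measure"
  have [measurable]: "\<phi>P \<in> borel_measurable lborel" "\<phi>D \<in> borel_measurable lborel"
    using dP dD unfolding is_density_on_def by auto
  have [measurable]: "(\<lambda>z. ?b i j (fst z) (snd z)) \<in> borel_measurable ?M" for i j
    unfolding shadow_block_def by measurable
  have b0: "?b i j y x \<ge> 0" if "i \<in> ?K" "j \<in> ?K" for i j y x
    by (rule shadow_block_nonneg[OF dP dD]) (rule \<alpha>[OF that])
  have c0: "?c i j \<ge> 0" for i j using cell_cost_nonneg[OF L r] .
  have pointwise: "ennreal (\<Sum>i\<in>?K. \<Sum>j\<in>?K. ?b i j y x) * ennreal (norm (x - y))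
      \<le> (\<Sum>i\<in>?K. \<Sum>j\<in>?K. ennreal (?b i j y x) * ennreal (?c i j))" for y x
  proof -
    have "?b i j y x * norm (x - y) \<le> ?b i j y x * ?c i j" if "i \<in> ?K" "j \<in> ?K" for i j
    proof (cases "y \<in> cell a L r i \<and> x \<in> cell a L r j")
      case True
      hence "norm (x - y) \<le> ?c i j"
        using cell_cost_bounds(1) cell_subset_ccell[OF L r] by blast
      thus ?thesis using b0[OF that] by (rule mult_left_mono)
    qed (simp add: shadow_block_eq_0)
    hence "(\<Sum>i\<in>?K. \<Sum>j\<in>?K. ?b i j y x) * norm (x - y) \<le> (\<Sum>i\<in>?K. \<Sum>j\<in>?K. ?b i j y x * ?c i j)"
      unfolding sum_distrib_right by (intro sum_mono) auto
    hence "ennreal ((\<Sum>i\<in>?K. \<Sum>j\<in>?K. ?b i j y x) * norm (x - y))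
        \<le> ennreal (\<Sum>i\<in>?K. \<Sum>j\<in>?K. ?b i j y x * ?c i j)"
      by (rule ennreal_leI)
    thus ?thesis
      using b0 c0 by (simp add: ennreal_mult'' ennreal_sum_sum ennreal_mult)
  qed
  have "shadow_expected_dist a L r \<phi>P \<phi>D \<alpha>
      = (\<integral>\<^sup>+z. ennreal (\<Sum>i\<in>?K. \<Sum>j\<in>?K. ?b i j (fst z) (snd z)) * ennreal (norm (snd z - fst z)) \<partial>?M)"
    unfolding shadow_expected_dist_def shadow_law_eq_density_shadow_block
    by (subst nn_integral_density) auto
  also have "\<dots> \<le> (\<integral>\<^sup>+z. (\<Sum>i\<in>?K. \<Sum>j\<in>?K. ennreal (?b i j (fst z) (snd z)) * ennreal (?c i j)) \<partial>?M)"
    by (intro nn_integral_mono pointwise)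
  also have "\<dots> = (\<Sum>i\<in>?K. \<Sum>j\<in>?K. (\<integral>\<^sup>+z. ennreal (?b i j (fst z) (snd z)) \<partial>?M) * ennreal (?c i j))"
    by (simp add: nn_integral_sum nn_integral_multc)
  also have "\<dots> \<le> (\<Sum>i\<in>?K. \<Sum>j\<in>?K. ennreal (\<alpha> i j) * ennreal (?c i j))"
    using nn_integral_shadow_block_le[OF dP dD] \<alpha> by (intro sum_mono mult_right_mono) auto
  also have "\<dots> = ennreal (lp_cost a L r \<alpha>)"
    unfolding lp_cost_def using \<alpha> c0 by (simp add: ennreal_sum_sum ennreal_mult)
  finally show ?thesis .
qed

lemma emeasure_density_indicator_times:
  assumes "is_density_on \<Omega> \<phi>" "\<Omega> \<in> sets lborel" "A \<in> sets lborel"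
  shows "emeasure (density lborel (\<lambda>x. ennreal (indicator \<Omega> x * \<phi> x))) A = ennreal (cmass \<phi> (A \<inter> \<Omega>))"
proof -
  have [measurable]: "\<phi> \<in> borel_measurable lborel" "\<Omega> \<in> sets lborel"
    using assms unfolding is_density_on_def by auto
  have "emeasure (density lborel (\<lambda>x. ennreal (indicator \<Omega> x * \<phi> x))) A
      = (\<integral>\<^sup>+x. ennreal (indicator (A \<inter> \<Omega>) x * \<phi> x) \<partial>lborel)"
    using assms(3) by (subst emeasure_density) (auto intro!: nn_integral_cong simp: indicator_def)
  also have "\<dots> = ennreal (cmass \<phi> (A \<inter> \<Omega>))"
    using assms by (intro nn_integral_indicator_times_density) auto
  finally show ?thesis .
qed

lemma sets_coupling: "\<gamma> \<in> couplings \<Omega> \<phi>1 \<phi>2 \<Longrightarrow> sets \<gamma> = sets (lborel \<Otimes>\<^sub>M lborel)"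
  unfolding couplings_def by blast

lemma space_coupling: "\<gamma> \<in> couplings \<Omega> \<phi>1 \<phi>2 \<Longrightarrow> space \<gamma> = UNIV"
  using sets_eq_imp_space_eq[OF sets_coupling] by (simp add: space_pair_measure)

lemma emeasure_coupling_times_UNIV:
  assumes "\<gamma> \<in> couplings \<Omega> \<phi>1 \<phi>2" "is_density_on \<Omega> \<phi>1" "\<Omega> \<in> sets lborel" "A \<in> sets lborel"
  shows "emeasure \<gamma> (A \<times> UNIV) = ennreal (cmass \<phi>1 (A \<inter> \<Omega>))"
proof -
  have [measurable_cong]: "sets \<gamma> = sets (lborel \<Otimes>\<^sub>M lborel)"
    by (rule sets_coupling[OF assms(1)])
  have marginal: "distr \<gamma> lborel fst = density lborel (\<lambda>x. ennreal (indicator \<Omega> x * \<phi>1 x))"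
    using assms(1) unfolding couplings_def by blast
  have "emeasure \<gamma> (A \<times> UNIV) = emeasure (distr \<gamma> lborel fst) A"
    using assms space_coupling by (subst emeasure_distr) (auto simp: vimage_fst)
  thus ?thesis
    unfolding marginal using emeasure_density_indicator_times assms(2-4) by simp
qed

lemma emeasure_coupling_UNIV_times:
  assumes "\<gamma> \<in> couplings \<Omega> \<phi>1 \<phi>2" "is_density_on \<Omega> \<phi>2" "\<Omega> \<in> sets lborel" "A \<in> sets lborel"
  shows "emeasure \<gamma> (UNIV \<times> A) = ennreal (cmass \<phi>2 (A \<inter> \<Omega>))"
proof -
  have [measurable_cong]: "sets \<gamma> = sets (lborel \<Otimes>\<^sub>M lborel)"
    by (rule sets_coupling[OF assms(1)])
  have marginal: "distr \<gamma> lborel snd = density lborel (\<lambda>x. ennreal (indicator \<Omega> x * \<phi>2 x))"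
    using assms(1) unfolding couplings_def by blast
  have "emeasure \<gamma> (UNIV \<times> A) = emeasure (distr \<gamma> lborel snd) A"
    using assms space_coupling by (subst emeasure_distr) (auto simp: vimage_snd)
  thus ?thesis
    unfolding marginal using emeasure_density_indicator_times assms(2-4) by simp
qed

lemma prob_space_coupling:
  assumes "\<gamma> \<in> couplings \<Omega> \<phi>1 \<phi>2" "is_density_on \<Omega> \<phi>1" "\<Omega> \<in> sets lborel"
  shows "prob_space \<gamma>"
proof
  have "emeasure \<gamma> (space \<gamma>) = emeasure \<gamma> (UNIV \<times> UNIV)"
    using space_coupling[OF assms(1)] by simp
  also have "\<dots> = ennreal (cmass \<phi>1 \<Omega>)"
    using emeasure_coupling_times_UNIV[OF assms, of UNIV] by simp
  finally show "emeasure \<gamma> (space \<gamma>) = 1"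
    using assms(2) unfolding is_density_on_def cmass_def by simp
qed

lemma AE_coupling_in_support:
  assumes "\<gamma> \<in> couplings \<Omega> \<phi>1 \<phi>2" "\<Omega> \<in> sets lborel"
  shows "AE z in \<gamma>. z \<in> \<Omega> \<times> \<Omega>"
proof (rule AE_I')
  have "space \<gamma> - \<Omega> \<times> \<Omega> \<in> sets \<gamma>"
    using assms sets_coupling[OF assms(1)] by (intro sets.Diff sets.top) auto
  moreover have "emeasure \<gamma> (space \<gamma> - \<Omega> \<times> \<Omega>) = 0"
    using assms(1) unfolding couplings_def by blast
  ultimately show "space \<gamma> - \<Omega> \<times> \<Omega> \<in> null_sets \<gamma>"
    by (intro null_setsI)
qed auto

section \<open>The plan induced by a coupling\<close>

definition coupling_plan ::
  "((real^'n) \<times> (real^'n)) measure \<Rightarrow> real^'n \<Rightarrow> real \<Rightarrow> nat \<Rightarrow> 'n cidx \<Rightarrow> 'n cidx \<Rightarrow> real"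
where
  "coupling_plan \<gamma> a L r i j = measure \<gamma> (cell a L r i \<times> cell a L r j)"

lemma sum_coupling_plan_row:
  fixes a :: "real^'n::finite"
  assumes r: "r \<ge> 1" and \<gamma>: "\<gamma> \<in> couplings (hcube a L) \<phi>D \<phi>P"
    and dD: "is_density_on (hcube a L) \<phi>D"
  shows "(\<Sum>j\<in>cell_indices r. coupling_plan \<gamma> a L r i j) = cmass \<phi>D (cell a L r i)"
proof -
  let ?C = "cell a L r" and ?H = "hcube a L"
  interpret prob_space \<gamma> by (rule prob_space_coupling[OF \<gamma> dD hcube_in_sets_lborel])
  have [measurable_cong]: "sets \<gamma> = sets (lborel \<Otimes>\<^sub>M lborel)" by (rule sets_coupling[OF \<gamma>])
  have "(\<Sum>j\<in>cell_indices r. coupling_plan \<gamma> a L r i j) = measure \<gamma> (\<Union>j\<in>cell_indices r. ?C i \<times> ?C j)"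
    unfolding coupling_plan_def
    by (intro finite_measure_finite_Union[symmetric] finite_cell_indices disjoint_family_on_times_cell)
       auto
  also have "(\<Union>j\<in>cell_indices r. ?C i \<times> ?C j) = ?C i \<times> ?H"
    using UN_cell_eq_hcube[OF r] by blast
  also have "emeasure \<gamma> (?C i \<times> ?H) = emeasure \<gamma> (?C i \<times> UNIV)"
    using AE_coupling_in_support[OF \<gamma> hcube_in_sets_lborel] by (intro emeasure_eq_AE) auto
  hence "measure \<gamma> (?C i \<times> ?H) = measure \<gamma> (?C i \<times> UNIV)"
    by (simp add: measure_def)
  also have "\<dots> = cmass \<phi>D (?C i)"
  proof -
    have "ennreal (measure \<gamma> (?C i \<times> UNIV)) = ennreal (cmass \<phi>D (?C i))"
      using emeasure_coupling_times_UNIV[OF \<gamma> dD hcube_in_sets_lborel cell_in_sets_lborel]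
        cell_subset_hcube[of a L r i] by (simp add: emeasure_eq_measure Int_absorb2)
    thus ?thesis using cmass_nonneg[OF dD cell_subset_hcube] by simp
  qed
  finally show ?thesis .
qed

lemma sum_coupling_plan_col:
  fixes a :: "real^'n::finite"
  assumes r: "r \<ge> 1" and \<gamma>: "\<gamma> \<in> couplings (hcube a L) \<phi>D \<phi>P"
    and dP: "is_density_on (hcube a L) \<phi>P" and dD: "is_density_on (hcube a L) \<phi>D"
  shows "(\<Sum>i\<in>cell_indices r. coupling_plan \<gamma> a L r i j) = cmass \<phi>P (cell a L r j)"
proof -
  let ?C = "cell a L r" and ?H = "hcube a L"
  interpret prob_space \<gamma> by (rule prob_space_coupling[OF \<gamma> dD hcube_in_sets_lborel])
  have [measurable_cong]: "sets \<gamma> = sets (lborel \<Otimes>\<^sub>M lborel)" by (rule sets_coupling[OF \<gamma>])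
  have "(\<Sum>i\<in>cell_indices r. coupling_plan \<gamma> a L r i j) = measure \<gamma> (\<Union>i\<in>cell_indices r. ?C i \<times> ?C j)"
    unfolding coupling_plan_def
    by (intro finite_measure_finite_Union[symmetric] finite_cell_indices disjoint_family_on_cell_times)
       auto
  also have "(\<Union>i\<in>cell_indices r. ?C i \<times> ?C j) = ?H \<times> ?C j"
    using UN_cell_eq_hcube[OF r] by blast
  also have "emeasure \<gamma> (?H \<times> ?C j) = emeasure \<gamma> (UNIV \<times> ?C j)"
    using AE_coupling_in_support[OF \<gamma> hcube_in_sets_lborel] by (intro emeasure_eq_AE) auto
  hence "measure \<gamma> (?H \<times> ?C j) = measure \<gamma> (UNIV \<times> ?C j)"
    by (simp add: measure_def)
  also have "\<dots> = cmass \<phi>P (?C j)"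
  proof -
    have "ennreal (measure \<gamma> (UNIV \<times> ?C j)) = ennreal (cmass \<phi>P (?C j))"
      using emeasure_coupling_UNIV_times[OF \<gamma> dP hcube_in_sets_lborel cell_in_sets_lborel]
        cell_subset_hcube[of a L r j] by (simp add: emeasure_eq_measure Int_absorb2)
    thus ?thesis using cmass_nonneg[OF dP cell_subset_hcube] by simp
  qed
  finally show ?thesis .
qed

lemma lp_feasible_coupling_plan:
  assumes "r \<ge> 1" "\<gamma> \<in> couplings (hcube a L) \<phi>D \<phi>P"
    and "is_density_on (hcube a L) \<phi>P" "is_density_on (hcube a L) \<phi>D"
  shows "lp_feasible a L r \<phi>P \<phi>D (coupling_plan \<gamma> a L r)"
  unfolding lp_feasible_def
  using sum_coupling_plan_row[OF assms(1,2,4)] sum_coupling_plan_col[OF assms]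
  by (simp add: coupling_plan_def)

lemma sum_indicator_cell_times_cell_le_1:
  assumes "r \<ge> 1"
  shows "(\<Sum>i\<in>cell_indices r. \<Sum>j\<in>cell_indices r. indicator (cell a L r i \<times> cell a L r j) z :: ennreal) \<le> 1"
proof -
  have "(\<Sum>i\<in>cell_indices r. \<Sum>j\<in>cell_indices r. indicator (cell a L r i \<times> cell a L r j) z :: ennreal)
      = (\<Sum>i\<in>cell_indices r. indicator (cell a L r i) (fst z)) * (\<Sum>j\<in>cell_indices r. indicator (cell a L r j) (snd z))"
    by (simp add: sum_product indicator_times split_beta)
  also have "\<dots> = indicator (hcube a L) (fst z) * indicator (hcube a L) (snd z)"
    by (simp add: sum_indicator_cell[OF assms])
  also have "\<dots> \<le> 1" by (simp add: indicator_def)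
  finally show ?thesis .
qed

lemma lp_cost_coupling_plan_le:
  fixes a :: "real^'n::finite"
  assumes L: "L > 0" and r: "r \<ge> 1" and \<gamma>: "\<gamma> \<in> couplings (hcube a L) \<phi>D \<phi>P"
    and dD: "is_density_on (hcube a L) \<phi>D"
  shows "ennreal (lp_cost a L r (coupling_plan \<gamma> a L r))
           \<le> (\<integral>\<^sup>+z. ennreal (norm (snd z - fst z)) \<partial>\<gamma>)
             + ennreal (2 * (L * sqrt (real CARD('n)) / real r))"
proof -
  let ?K = "cell_indices r :: 'n cidx set" and ?C = "cell a L r"
  let ?D = "L * sqrt (real CARD('n)) / real r"
  let ?f = "\<lambda>z. ennreal (norm (snd z - fst z)) + ennreal (2 * ?D)"
  interpret prob_space \<gamma> by (rule prob_space_coupling[OF \<gamma> dD hcube_in_sets_lborel])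
  have [measurable_cong]: "sets \<gamma> = sets (lborel \<Otimes>\<^sub>M lborel)" by (rule sets_coupling[OF \<gamma>])
  have c0: "cell_cost a L r i j \<ge> 0" for i j using cell_cost_nonneg[OF L r] .
  have block: "ennreal (cell_cost a L r i j) * indicator (?C i \<times> ?C j) z
      \<le> ?f z * indicator (?C i \<times> ?C j) z" for i j z
  proof (cases "z \<in> ?C i \<times> ?C j")
    case True
    then obtain y x where z: "z = (y, x)" "y \<in> ccell a L r i" "x \<in> ccell a L r j"
      using cell_subset_ccell[OF L r] by (cases z) blast
    have "cell_cost a L r i j \<le> norm (x - y) + 2 * ?D"
      by (rule cell_cost_bounds(2)[OF z(3,2)])
    hence "ennreal (cell_cost a L r i j) \<le> ennreal (norm (x - y) + 2 * ?D)"
      by (rule ennreal_leI)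
    also have "\<dots> = ?f z"
      using z(1) L by simp
    finally show ?thesis using True by simp
  qed simp
  have "ennreal (lp_cost a L r (coupling_plan \<gamma> a L r))
      = (\<Sum>i\<in>?K. \<Sum>j\<in>?K. ennreal (cell_cost a L r i j) * emeasure \<gamma> (?C i \<times> ?C j))"
    unfolding lp_cost_def coupling_plan_def
    using c0 by (simp add: ennreal_sum_sum ennreal_mult emeasure_eq_measure mult.commute)
  also have "\<dots> = (\<Sum>i\<in>?K. \<Sum>j\<in>?K. \<integral>\<^sup>+z. ennreal (cell_cost a L r i j) * indicator (?C i \<times> ?C j) z \<partial>\<gamma>)"
    by (simp add: nn_integral_cmult_indicator)
  also have "\<dots> \<le> (\<Sum>i\<in>?K. \<Sum>j\<in>?K. \<integral>\<^sup>+z. ?f z * indicator (?C i \<times> ?C j) z \<partial>\<gamma>)"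
    by (intro sum_mono nn_integral_mono block)
  also have "\<dots> = (\<integral>\<^sup>+z. ?f z * (\<Sum>i\<in>?K. \<Sum>j\<in>?K. indicator (?C i \<times> ?C j) z) \<partial>\<gamma>)"
    by (simp add: nn_integral_sum sum_distrib_left)
  also have "\<dots> \<le> (\<integral>\<^sup>+z. ?f z \<partial>\<gamma>)"
    by (intro nn_integral_mono order_trans[OF mult_left_mono[OF sum_indicator_cell_times_cell_le_1[OF r] zero_le]])
       simp
  also have "\<dots> = (\<integral>\<^sup>+z. ennreal (norm (snd z - fst z)) \<partial>\<gamma>) + ennreal (2 * ?D)"
    by (simp add: nn_integral_add emeasure_space_1)
  finally show ?thesis .
qed

lemma lp_cost_le_wasserstein:
  fixes a :: "real^'n::finite"
  assumes L: "L > 0" and r: "r \<ge> 1"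
    and dP: "is_density_on (hcube a L) \<phi>P" and dD: "is_density_on (hcube a L) \<phi>D"
    and opt: "lp_optimal a L r \<phi>P \<phi>D \<alpha>"
  shows "ennreal (lp_cost a L r \<alpha>)
           \<le> wasserstein (hcube a L) \<phi>D \<phi>P + ennreal (2 * L * sqrt (real CARD('n)) / real r)"
proof -
  let ?c = "ennreal (2 * L * sqrt (real CARD('n)) / real r)"
  have "ennreal (lp_cost a L r \<alpha>) - ?c \<le> wasserstein (hcube a L) \<phi>D \<phi>P"
    unfolding wasserstein_def
  proof (rule INF_greatest)
    fix \<gamma> assume \<gamma>: "\<gamma> \<in> couplings (hcube a L) \<phi>D \<phi>P"
    have "lp_cost a L r \<alpha> \<le> lp_cost a L r (coupling_plan \<gamma> a L r)"
      using opt lp_feasible_coupling_plan[OF r \<gamma> dP dD] unfolding lp_optimal_def by blast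
    hence "ennreal (lp_cost a L r \<alpha>) \<le> ennreal (lp_cost a L r (coupling_plan \<gamma> a L r))"
      by (rule ennreal_leI)
    also have "\<dots> \<le> (\<integral>\<^sup>+z. ennreal (norm (snd z - fst z)) \<partial>\<gamma>) + ?c"
      using lp_cost_coupling_plan_le[OF L r \<gamma> dD] by (simp add: mult.assoc)
    finally show "ennreal (lp_cost a L r \<alpha>) - ?c \<le> (\<integral>\<^sup>+z. ennreal (norm (snd z - fst z)) \<partial>\<gamma>)"
      by (simp add: ennreal_minus_le_iff add.commute)
  qed
  thus ?thesis by (simp add: ennreal_minus_le_iff add.commute)
qed

theorem lemma8:
  fixes a :: "real^'n" and L :: real and r :: nat
    and \<phi>P \<phi>D :: "real^'n \<Rightarrow> real"
    and \<alpha> :: "'n cidx \<Rightarrow> 'n cidx \<Rightarrow> real"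
  assumes "L > 0" and "r \<ge> 1"
    and "is_density_on (hcube a L) \<phi>P"
    and "is_density_on (hcube a L) \<phi>D"
    and "lp_optimal a L r \<phi>P \<phi>D \<alpha>"
  shows "shadow_expected_dist a L r \<phi>P \<phi>D \<alpha>
           \<le> wasserstein (hcube a L) \<phi>D \<phi>P
             + ennreal (2 * L * sqrt (real CARD('n)) / real r)"
proof -
  have "\<And>i j. i \<in> cell_indices r \<Longrightarrow> j \<in> cell_indices r \<Longrightarrow> \<alpha> i j \<ge> 0"
    using assms(5) unfolding lp_optimal_def lp_feasible_def by blast
  hence "shadow_expected_dist a L r \<phi>P \<phi>D \<alpha> \<le> ennreal (lp_cost a L r \<alpha>)"
    using shadow_expected_dist_le_lp_cost[OF assms(1-4)] by blast
  also have "\<dots> \<le> wasserstein (hcube a L) \<phi>D \<phi>P + ennreal (2 * L * sqrt (real CARD('n)) / real r)"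
    by (rule lp_cost_le_wasserstein[OF assms])
  finally show ?thesis .
qed

end
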